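(* Let $\phi_1,\dots,\phi_N\in\mathbb{R}^d$ (not all zero) and $\theta^*\in\mathbb{R}^d$; set $\pi_i^*=\sigma(\phi_i^\top\theta^* )$, and for $\theta\in\mathbb{R}^d$ set $\pi_i=\sigma(\phi_i^\top\theta)$ and $\mathcal{L}(\theta)=\frac1N\sum_{i=1}^N(\pi_i-\pi_i^* )^2$. Let $u(\theta)=\min_i\pi_i(1-\pi_i)$, $v=\min_i\pi_i^*(1-\pi_i^* )$, and $\lambda_\phi$ the smallest positive eigenvalue of $\frac1N\sum_i\phi_i\phi_i^\top$. Then for all $\theta\in\mathbb{R}^d$, $$\Big\|\frac{\partial\mathcal{L}(\theta)}{\partial\theta}\Big\|_2\ge 8\,u(\theta)\min\{u(\theta),v\}\sqrt{\lambda_\phi}\Big[\frac1N\sum_{i=1}^N(\pi_i-\pi_i^* )^2\Big]^{1/2}.$$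
   Context: $\sigma(z)=1/(1+e^{-z})$ is the sigmoid function. *)

theory Defs
  imports "HOL-Analysis.Analysis"
begin

definition sigmoid :: "real \<Rightarrow> real" where
  "sigmoid z = 1 / (1 + exp (- z))"

definition is_eigenvalue :: "real^'n^'n \<Rightarrow> real \<Rightarrow> bool" where
  "is_eigenvalue A l \<longleftrightarrow> (\<exists>x. x \<noteq> 0 \<and> A *v x = l *\<^sub>R x)"

definition min_pos_eigenvalue :: "real^'n^'n \<Rightarrow> real" where
  "min_pos_eigenvalue A = Inf {l. l > 0 \<and> is_eigenvalue A l}"

definition second_moment :: "nat \<Rightarrow> (nat \<Rightarrow> real^'d) \<Rightarrow> real^'d^'d" where
  "second_moment N phi = (\<chi> j k. (1 / real N) * (\<Sum>i<N. phi i $ j * phi i $ k))"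

definition loss :: "nat \<Rightarrow> (nat \<Rightarrow> real^'d) \<Rightarrow> real^'d \<Rightarrow> real^'d \<Rightarrow> real" where
  "loss N phi \<theta>s \<theta> = (1 / real N) * (\<Sum>i<N. (sigmoid (phi i \<bullet> \<theta>) - sigmoid (phi i \<bullet> \<theta>s))\<^sup>2)"

definition u_min :: "nat \<Rightarrow> (nat \<Rightarrow> real^'d) \<Rightarrow> real^'d \<Rightarrow> real" where
  "u_min N phi \<theta> = Min ((\<lambda>i. sigmoid (phi i \<bullet> \<theta>) * (1 - sigmoid (phi i \<bullet> \<theta>))) ` {..<N})"

end

theory Submission
  imports Defs
begin

text \<open>
  By the mean value theorem every residual \<open>\<pi>\<^sub>i - \<pi>\<^sub>i\<^sup>*\<close> equals \<open>d\<^sub>i \<phi>\<^sub>i\<^sup>T\<delta>\<close>, where \<open>\<delta>\<close> is the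
  projection of \<open>\<theta> - \<theta>\<^sup>*\<close> onto the span of the features and the slope \<open>d\<^sub>i\<close> of the sigmoid
  lies between \<open>min{u, v}\<close> (concavity of \<open>p(1 - p)\<close>) and \<open>1/4\<close>. Pairing the gradient
  with \<open>\<delta>\<close> therefore gives at least \<open>(2/N) u min{u, v} \<Sum> (\<phi>\<^sub>i\<^sup>T\<delta>)\<^sup>2\<close>, while the loss is at
  most \<open>(1/16N) \<Sum> (\<phi>\<^sub>i\<^sup>T\<delta>)\<^sup>2\<close>. Cauchy-Schwarz and the Rayleigh bound
  \<open>N \<lambda>\<^sub>\<phi> |\<delta>|\<^sup>2 \<le> \<Sum> (\<phi>\<^sub>i\<^sup>T\<delta>)\<^sup>2\<close> on the span, obtained by minimising the quadratic form
  over the unit sphere of the span, combine these into the claim.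
\<close>

definition dsigmoid :: "real \<Rightarrow> real" where
  "dsigmoid z = sigmoid z * (1 - sigmoid z)"

lemma sigmoid_gt_0: "0 < sigmoid z"
  and sigmoid_less_1: "sigmoid z < 1"
  unfolding sigmoid_def by (auto simp: add_pos_pos)

lemma sigmoid_mono: "x \<le> y \<Longrightarrow> sigmoid x \<le> sigmoid y"
  unfolding sigmoid_def by (simp add: frac_le add_pos_pos)

lemma dsigmoid_nonneg: "0 \<le> dsigmoid z"
  unfolding dsigmoid_def using sigmoid_gt_0[of z] sigmoid_less_1[of z] by auto

lemma dsigmoid_le_quarter: "dsigmoid z \<le> 1/4"
proof -
  have "0 \<le> (sigmoid z - 1/2)\<^sup>2" by simp
  then show ?thesis unfolding dsigmoid_def by (simp add: power2_eq_square algebra_simps)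
qed

lemma DERIV_sigmoid: "DERIV sigmoid z :> dsigmoid z"
proof -
  have pos: "1 + exp (- z) \<noteq> 0" by (smt (verit) exp_gt_zero)
  have "DERIV (\<lambda>z. 1 / (1 + exp (- z))) z :> exp (- z) / (1 + exp (- z))\<^sup>2"
    using pos by (auto intro!: derivative_eq_intros simp: power2_eq_square)
  moreover have "exp (- z) / (1 + exp (- z))\<^sup>2 = dsigmoid z"
    unfolding dsigmoid_def sigmoid_def using pos by (simp add: field_simps power2_eq_square)
  ultimately show ?thesis unfolding sigmoid_def[abs_def] by simp
qed

lemma min_logistic_le_between:
  fixes p p1 p2 :: real
  assumes "p1 \<le> p" "p \<le> p2"
  shows "min (p1 * (1 - p1)) (p2 * (1 - p2)) \<le> p * (1 - p)"
proof (cases "p + p1 \<le> 1")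
  case True
  have "p * (1 - p) - p1 * (1 - p1) = (p - p1) * (1 - p - p1)" by algebra
  moreover have "0 \<le> (p - p1) * (1 - p - p1)" using True assms by simp
  ultimately show ?thesis by linarith
next
  case False
  have "p * (1 - p) - p2 * (1 - p2) = (p2 - p) * (p + p2 - 1)" by algebra
  moreover have "0 \<le> (p2 - p) * (p + p2 - 1)" using False assms by simp
  ultimately show ?thesis by linarith
qed

lemma dsigmoid_between: "x \<le> z \<Longrightarrow> z \<le> y \<Longrightarrow> min (dsigmoid x) (dsigmoid y) \<le> dsigmoid z"
  unfolding dsigmoid_def using min_logistic_le_between sigmoid_mono by blast

lemma sigmoid_diff_eq_mult:
  obtains d where "sigmoid x - sigmoid y = d * (x - y)"
    and "min (dsigmoid x) (dsigmoid y) \<le> d" and "d \<le> 1/4"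
proof -
  have mvt: "\<exists>d. sigmoid b - sigmoid a = d * (b - a) \<and> min (dsigmoid a) (dsigmoid b) \<le> d \<and> d \<le> 1/4"
    if "a < b" for a b
  proof -
    obtain z where "a < z" "z < b" "sigmoid b - sigmoid a = (b - a) * dsigmoid z"
      using MVT2[OF \<open>a < b\<close>, of sigmoid dsigmoid] DERIV_sigmoid by blast
    then show ?thesis
      using dsigmoid_between[of a z b] dsigmoid_le_quarter[of z] by (metis less_imp_le mult.commute)
  qed
  consider "x = y" | "y < x" | "x < y" by linarith
  then show thesis
  proof cases
    case 1
    then show thesis using that[of "dsigmoid x"] dsigmoid_le_quarter[of x] by simp
  next
    case 2
    then show thesis using that mvt[of y x] by (auto simp: min.commute)
  next
    case 3
    then show thesis using that mvt[of x y] by (smt (verit) mult_minus_right minus_diff_eq)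
  qed
qed

lemma sigmoid_diff_sq_le: "(sigmoid x - sigmoid y)\<^sup>2 \<le> (x - y)\<^sup>2 / 16"
proof -
  obtain d where d: "sigmoid x - sigmoid y = d * (x - y)" "min (dsigmoid x) (dsigmoid y) \<le> d" "d \<le> 1/4"
    by (rule sigmoid_diff_eq_mult)
  have "0 \<le> d" using d(2) dsigmoid_nonneg[of x] dsigmoid_nonneg[of y] by linarith
  then have "d\<^sup>2 \<le> (1/4)\<^sup>2" using d(3) by (intro power_mono)
  then have "d\<^sup>2 * (x - y)\<^sup>2 \<le> (1/4)\<^sup>2 * (x - y)\<^sup>2" by (intro mult_right_mono) auto
  then show ?thesis unfolding d(1) power_mult_distrib by (simp add: power_divide)
qed

lemma sigmoid_diff_mult_ge:
  assumes "0 \<le> u" "u \<le> dsigmoid x" "0 \<le> v" "v \<le> dsigmoid y"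
  shows "u * min u v * (x - y)\<^sup>2 \<le> (sigmoid x - sigmoid y) * dsigmoid x * (x - y)"
proof -
  obtain d where d: "sigmoid x - sigmoid y = d * (x - y)" "min (dsigmoid x) (dsigmoid y) \<le> d"
    by (rule sigmoid_diff_eq_mult)
  have "min u v \<le> d" using d(2) assms by linarith
  then have "u * min u v \<le> dsigmoid x * d" using assms by (intro mult_mono) auto
  then have "u * min u v * (x - y)\<^sup>2 \<le> dsigmoid x * d * (x - y)\<^sup>2" by (intro mult_right_mono) auto
  then show ?thesis unfolding d(1) by (simp add: power2_eq_square mult_ac)
qed

lemma linear_coeff_zero_if_quadratic_nonneg:
  fixes a k :: real
  assumes "\<And>t. 0 \<le> t * a + t\<^sup>2 * k"
  shows "a = 0"
proof (rule ccontr)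
  assume "a \<noteq> 0"
  define c where "c = \<bar>k\<bar> + 1"
  have c: "c > 0" "\<bar>k\<bar> < c" unfolding c_def by auto
  define t where "t = - a / c"
  have "t * a + t\<^sup>2 * k \<le> t * a + t\<^sup>2 * \<bar>k\<bar>"
    by (intro add_left_mono mult_left_mono) auto
  also have "\<dots> = - a\<^sup>2 * (c - \<bar>k\<bar>) / c\<^sup>2"
    unfolding t_def using c by (simp add: field_simps power2_eq_square)
  also have "\<dots> < 0"
    using \<open>a \<noteq> 0\<close> c by (intro divide_neg_pos mult_neg_pos) auto
  finally show False using assms[of t] by linarith
qed

lemma Rayleigh_minimizer_exists:
  fixes phi :: "'i \<Rightarrow> 'a::euclidean_space"
  assumes "\<exists>i\<in>I. phi i \<noteq> 0"
  obtains x0 where "x0 \<in> span (phi ` I)" "norm x0 = 1"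
    "\<And>x. x \<in> span (phi ` I) \<Longrightarrow> (\<Sum>i\<in>I. (phi i \<bullet> x0)\<^sup>2) * (norm x)\<^sup>2 \<le> (\<Sum>i\<in>I. (phi i \<bullet> x)\<^sup>2)"
proof -
  define V where "V = span (phi ` I)"
  define Q where "Q x = (\<Sum>i\<in>I. (phi i \<bullet> x)\<^sup>2)" for x
  define K where "K = V \<inter> sphere 0 1"
  obtain i0 where i0: "i0 \<in> I" "phi i0 \<noteq> 0" using assms by blast
  have "compact K"
    unfolding K_def V_def by (simp add: closed_Int_compact)
  moreover have "(1 / norm (phi i0)) *\<^sub>R phi i0 \<in> K"
    unfolding K_def V_def using i0 by (auto intro: span_mul span_base)
  moreover have "continuous_on K Q" unfolding Q_def by (intro continuous_intros)
  ultimately obtain x0 where x0: "x0 \<in> K" and min: "\<And>y. y \<in> K \<Longrightarrow> Q x0 \<le> Q y"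
    using continuous_attains_inf by (metis empty_iff)
  have "Q x0 * (norm x)\<^sup>2 \<le> Q x" if "x \<in> V" for x
  proof (cases "x = 0")
    case True
    then show ?thesis by (simp add: Q_def)
  next
    case False
    have "(1 / norm x) *\<^sub>R x \<in> K"
      using that False unfolding K_def V_def by (auto intro: span_mul)
    then have "Q x0 \<le> Q ((1 / norm x) *\<^sub>R x)" by (rule min)
    also have "\<dots> = Q x / (norm x)\<^sup>2"
      unfolding Q_def by (simp add: power_mult_distrib power_divide sum_divide_distrib)
    finally show ?thesis using False by (simp add: field_simps)
  qed
  moreover have "x0 \<in> V" "norm x0 = 1" using x0 unfolding K_def by auto
  ultimately show thesis using that unfolding V_def Q_def by blast
qed

lemma Rayleigh_minimizer_stationary:
  fixes phi :: "'i \<Rightarrow> 'a::euclidean_space" and I :: "'i set"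
  defines "Q x \<equiv> \<Sum>i\<in>I. (phi i \<bullet> x)\<^sup>2"
  assumes x0: "x0 \<in> span (phi ` I)" "norm x0 = 1"
    and min: "\<And>x. x \<in> span (phi ` I) \<Longrightarrow> Q x0 * (norm x)\<^sup>2 \<le> Q x"
  shows "(\<Sum>i\<in>I. (phi i \<bullet> x0) *\<^sub>R phi i) = Q x0 *\<^sub>R x0"
proof -
  define s where "s = (\<Sum>i\<in>I. (phi i \<bullet> x0) *\<^sub>R phi i)"
  define r where "r = s - Q x0 *\<^sub>R x0"
  have "s \<in> span (phi ` I)" unfolding s_def by (intro span_sum span_mul span_base) auto
  then have r: "r \<in> span (phi ` I)" unfolding r_def using x0(1) by (simp add: span_diff span_mul)
  have "Q (x0 + t *\<^sub>R r) - Q x0 * (norm (x0 + t *\<^sub>R r))\<^sup>2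
      = t * (2 * (r \<bullet> r)) + t\<^sup>2 * (Q r - Q x0 * (norm r)\<^sup>2)" for t
  proof -
    have "Q (x0 + t *\<^sub>R r) = Q x0 + 2 * t * (s \<bullet> r) + t\<^sup>2 * Q r"
      unfolding Q_def s_def
      by (simp add: inner_sum_left power2_sum sum.distrib sum_distrib_left algebra_simps)
    moreover have "(norm (x0 + t *\<^sub>R r))\<^sup>2 = 1 + 2 * t * (x0 \<bullet> r) + t\<^sup>2 * (norm r)\<^sup>2"
      using x0(2) unfolding power2_norm_eq_inner norm_eq_1
      by (simp add: inner_commute power2_eq_square algebra_simps)
    moreover have "s = r + Q x0 *\<^sub>R x0" unfolding r_def by simp
    ultimately show ?thesis by (simp add: algebra_simps)
  qed
  \<comment> \<open>\<open>x0 + t r\<close> stays in the span, so this quadratic in \<open>t\<close> is nonnegative and its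
    linear coefficient \<open>2 |r|\<^sup>2\<close> must vanish\<close>
  moreover have "0 \<le> Q (x0 + t *\<^sub>R r) - Q x0 * (norm (x0 + t *\<^sub>R r))\<^sup>2" for t
    using min x0(1) r by (simp add: span_add span_mul)
  ultimately have "2 * (r \<bullet> r) = 0"
    by (intro linear_coeff_zero_if_quadratic_nonneg[where k = "Q r - Q x0 * (norm r)\<^sup>2"]) metis
  then show ?thesis unfolding r_def s_def by simp
qed

lemma sum_sq_inner_pos_on_span:
  fixes phi :: "'i \<Rightarrow> 'a::real_inner"
  assumes "finite I" "x \<in> span (phi ` I)" "x \<noteq> 0"
  shows "0 < (\<Sum>i\<in>I. (phi i \<bullet> x)\<^sup>2)"
proof (rule ccontr)
  assume "\<not> 0 < (\<Sum>i\<in>I. (phi i \<bullet> x)\<^sup>2)"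
  moreover have "0 \<le> (\<Sum>i\<in>I. (phi i \<bullet> x)\<^sup>2)" by (simp add: sum_nonneg)
  ultimately have "\<forall>i\<in>I. (phi i \<bullet> x)\<^sup>2 = 0"
    using assms(1) by (subst sum_nonneg_eq_0_iff[symmetric]) auto
  then have "\<And>y. y \<in> phi ` I \<Longrightarrow> orthogonal x y"
    by (auto simp: orthogonal_def inner_commute)
  then have "orthogonal x x" using orthogonal_to_span assms(2) by blast
  then show False using assms(3) by (simp add: orthogonal_def)
qed

lemma second_moment_mult_vec:
  "second_moment N phi *v x = (1 / real N) *\<^sub>R (\<Sum>i<N. (phi i \<bullet> x) *\<^sub>R phi i)"
  unfolding second_moment_def
  by (simp add: vec_eq_iff matrix_vector_mult_def inner_vec_def sum_distrib_left sum_distrib_right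
      sum.swap[of _ "{..<N}"] algebra_simps)

lemma min_pos_eigenvalue_nonneg:
  assumes "is_eigenvalue A l" "0 < l"
  shows "0 \<le> min_pos_eigenvalue A"
  unfolding min_pos_eigenvalue_def using assms by (intro cInf_greatest) auto

lemma min_pos_eigenvalue_le:
  assumes "is_eigenvalue A l" "0 < l"
  shows "min_pos_eigenvalue A \<le> l"
  unfolding min_pos_eigenvalue_def using assms by (intro cInf_lower bdd_belowI[of _ 0]) auto

lemma second_moment_Rayleigh:
  fixes phi :: "nat \<Rightarrow> real^'d"
  assumes "\<exists>i<N. phi i \<noteq> 0"
  shows "0 \<le> min_pos_eigenvalue (second_moment N phi)"
    and "x \<in> span (phi ` {..<N}) \<Longrightarrow>
      real N * min_pos_eigenvalue (second_moment N phi) * (norm x)\<^sup>2 \<le> (\<Sum>i<N. (phi i \<bullet> x)\<^sup>2)"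
proof -
  define \<mu> where "\<mu> x = (\<Sum>i<N. (phi i \<bullet> x)\<^sup>2)" for x
  have N: "real N > 0" using assms by auto
  obtain x0 where x0: "x0 \<in> span (phi ` {..<N})" "norm x0 = 1"
    and min: "\<And>x. x \<in> span (phi ` {..<N}) \<Longrightarrow> \<mu> x0 * (norm x)\<^sup>2 \<le> \<mu> x"
    using Rayleigh_minimizer_exists[of "{..<N}" phi] assms unfolding \<mu>_def by blast
  have "\<mu> x0 > 0"
    unfolding \<mu>_def using x0 by (intro sum_sq_inner_pos_on_span) auto
  moreover have "second_moment N phi *v x0 = (\<mu> x0 / real N) *\<^sub>R x0"
    using Rayleigh_minimizer_stationary[OF x0 min[unfolded \<mu>_def]]
    unfolding second_moment_mult_vec \<mu>_def by simp
  ultimately have eig: "is_eigenvalue (second_moment N phi) (\<mu> x0 / real N)" "0 < \<mu> x0 / real N"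
    unfolding is_eigenvalue_def using x0(2) N by (auto intro!: exI[of _ x0])
  then show "0 \<le> min_pos_eigenvalue (second_moment N phi)" by (rule min_pos_eigenvalue_nonneg)
  assume "x \<in> span (phi ` {..<N})"
  have "real N * min_pos_eigenvalue (second_moment N phi) \<le> \<mu> x0"
    using min_pos_eigenvalue_le[OF eig] N by (simp add: field_simps)
  then have "real N * min_pos_eigenvalue (second_moment N phi) * (norm x)\<^sup>2 \<le> \<mu> x0 * (norm x)\<^sup>2"
    by (intro mult_right_mono) auto
  also have "\<dots> \<le> \<mu> x" using min \<open>x \<in> _\<close> .
  finally show "real N * min_pos_eigenvalue (second_moment N phi) * (norm x)\<^sup>2 \<le> (\<Sum>i<N. (phi i \<bullet> x)\<^sup>2)"
    unfolding \<mu>_def .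
qed

definition loss_grad :: "nat \<Rightarrow> (nat \<Rightarrow> real^'d) \<Rightarrow> real^'d \<Rightarrow> real^'d \<Rightarrow> real^'d" where
  "loss_grad N phi \<theta>s \<theta> = (2 / real N) *\<^sub>R
     (\<Sum>i<N. ((sigmoid (phi i \<bullet> \<theta>) - sigmoid (phi i \<bullet> \<theta>s)) * dsigmoid (phi i \<bullet> \<theta>)) *\<^sub>R phi i)"

lemma has_derivative_sigmoid_inner:
  "((\<lambda>\<theta>. sigmoid (p \<bullet> \<theta>)) has_derivative (\<lambda>h. dsigmoid (p \<bullet> \<theta>) * (p \<bullet> h))) (at \<theta>)"
  by (rule has_derivative_compose[OF has_derivative_inner_right[OF has_derivative_ident]
      DERIV_sigmoid[unfolded has_field_derivative_def]])

lemma GDERIV_loss: "GDERIV (loss N phi \<theta>s) \<theta> :> loss_grad N phi \<theta>s \<theta>"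
proof -
  have loss_eq: "loss N phi \<theta>s = (\<lambda>\<theta>. (1 / real N) * (\<Sum>i<N. (sigmoid (phi i \<bullet> \<theta>) - sigmoid (phi i \<bullet> \<theta>s))\<^sup>2))"
    by (rule ext) (simp add: loss_def)
  show ?thesis
    unfolding gderiv_def loss_grad_def loss_eq
    by (rule has_derivative_eq_rhs,
        (rule derivative_eq_intros has_derivative_sigmoid_inner | simp)+)
      (simp add: fun_eq_iff inner_sum_right sum_distrib_left algebra_simps inner_commute)
qed

lemma u_min_le_dsigmoid: "i < N \<Longrightarrow> u_min N phi \<theta> \<le> dsigmoid (phi i \<bullet> \<theta>)"
  unfolding u_min_def dsigmoid_def by (intro Min_le) auto

lemma u_min_nonneg: "0 < N \<Longrightarrow> 0 \<le> u_min N phi \<theta>"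
  unfolding u_min_def using dsigmoid_nonneg by (subst Min_ge_iff) (auto simp: dsigmoid_def)

lemma span_inner_representative:
  fixes phi :: "'i \<Rightarrow> 'a::euclidean_space"
  obtains \<delta> where "\<delta> \<in> span (phi ` I)" "\<And>i. i \<in> I \<Longrightarrow> phi i \<bullet> \<delta> = phi i \<bullet> x"
proof -
  obtain \<delta> z where \<delta>: "\<delta> \<in> span (phi ` I)" "x = \<delta> + z"
    and z: "\<And>w. w \<in> span (phi ` I) \<Longrightarrow> orthogonal z w"
    using orthogonal_subspace_decomp_exists by metis
  have "phi i \<bullet> z = 0" if "i \<in> I" for i
    using z[of "phi i"] that by (auto simp: orthogonal_def inner_commute intro: span_base)
  then show thesis using that \<delta> by (simp add: inner_add_right)
qed

lemma residual_sq_sum_le: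
  assumes "\<And>i. i < N \<Longrightarrow> phi i \<bullet> \<delta> = phi i \<bullet> (\<theta> - \<theta>s)"
  shows "(\<Sum>i<N. (sigmoid (phi i \<bullet> \<theta>) - sigmoid (phi i \<bullet> \<theta>s))\<^sup>2) \<le> (\<Sum>i<N. (phi i \<bullet> \<delta>)\<^sup>2) / 16"
  unfolding sum_divide_distrib using assms sigmoid_diff_sq_le
  by (intro sum_mono) (simp add: inner_diff_right)

lemma loss_grad_inner_ge:
  assumes "0 < N" "\<And>i. i < N \<Longrightarrow> phi i \<bullet> \<delta> = phi i \<bullet> (\<theta> - \<theta>s)"
  shows "2 / real N * (u_min N phi \<theta> * min (u_min N phi \<theta>) (u_min N phi \<theta>s)) * (\<Sum>i<N. (phi i \<bullet> \<delta>)\<^sup>2)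
    \<le> loss_grad N phi \<theta>s \<theta> \<bullet> \<delta>"
proof -
  let ?u = "u_min N phi \<theta>" and ?v = "u_min N phi \<theta>s"
  have "?u * min ?u ?v * (phi i \<bullet> \<delta>)\<^sup>2
      \<le> ((sigmoid (phi i \<bullet> \<theta>) - sigmoid (phi i \<bullet> \<theta>s)) * dsigmoid (phi i \<bullet> \<theta>)) * (phi i \<bullet> \<delta>)"
    if "i < N" for i
    using sigmoid_diff_mult_ge[OF u_min_nonneg u_min_le_dsigmoid u_min_nonneg u_min_le_dsigmoid]
      assms that by (simp add: inner_diff_right)
  then have "?u * min ?u ?v * (\<Sum>i<N. (phi i \<bullet> \<delta>)\<^sup>2)
      \<le> (\<Sum>i<N. ((sigmoid (phi i \<bullet> \<theta>) - sigmoid (phi i \<bullet> \<theta>s)) * dsigmoid (phi i \<bullet> \<theta>)) * (phi i \<bullet> \<delta>))"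
    unfolding sum_distrib_left by (intro sum_mono) auto
  then have "2 / real N * (?u * min ?u ?v * (\<Sum>i<N. (phi i \<bullet> \<delta>)\<^sup>2))
      \<le> 2 / real N * (\<Sum>i<N. ((sigmoid (phi i \<bullet> \<theta>) - sigmoid (phi i \<bullet> \<theta>s)) * dsigmoid (phi i \<bullet> \<theta>)) * (phi i \<bullet> \<delta>))"
    by (rule mult_left_mono) simp
  then show ?thesis
    unfolding loss_grad_def by (simp add: inner_sum_left mult.assoc)
qed

lemma mult_sqrt_le_of_ratio_bounds:
  fixes g n m Q l :: real
  assumes "0 \<le> g" "0 \<le> n" "0 \<le> m" "0 \<le> Q" "0 \<le> l"
    and "m * Q \<le> g * n" "l * n\<^sup>2 \<le> Q"
  shows "m * sqrt (l * Q) \<le> g"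
proof (cases "n = 0")
  case True
  have "m * Q \<le> 0" using assms True by simp
  moreover have "0 \<le> m * Q" using assms by simp
  ultimately have "m * Q = 0" by linarith
  then show ?thesis using assms by auto
next
  case False
  then have n: "0 < n" using assms by simp
  have "l * Q * n\<^sup>2 \<le> Q * Q" using assms by (metis mult.commute mult_left_mono mult.assoc)
  then have "l * Q \<le> (Q / n)\<^sup>2" using n by (simp add: field_simps power2_eq_square)
  then have "sqrt (l * Q) \<le> Q / n" using assms n by (simp add: real_le_lsqrt)
  then have "m * sqrt (l * Q) \<le> m * (Q / n)" using assms by (intro mult_left_mono)
  also have "\<dots> \<le> g" using assms n by (simp add: field_simps)
  finally show ?thesis .
qed

lemma gradient_norm_lower_bound_arith:
  fixes c g n m Q l S :: real
  assumes "0 < c" "0 \<le> g" "0 \<le> n" "0 \<le> m" "0 \<le> l"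
    and "2 / c * m * Q \<le> g * n" "c * l * n\<^sup>2 \<le> Q" "S \<le> Q / 16"
  shows "8 * m * sqrt l * sqrt (1 / c * S) \<le> g"
proof -
  have "0 \<le> Q" using assms by (smt (verit) mult_nonneg_nonneg zero_le_power2)
  have "2 * m * (Q / c) \<le> g * n" "l * n\<^sup>2 \<le> Q / c"
    using assms by (simp_all add: field_simps)
  then have "2 * m * sqrt (l * (Q / c)) \<le> g"
    using assms \<open>0 \<le> Q\<close> by (intro mult_sqrt_le_of_ratio_bounds) auto
  then have "2 * m * (sqrt l * sqrt (Q / c)) \<le> g" by (simp only: real_sqrt_mult)
  moreover have "sqrt 16 * sqrt (1 / c * S) \<le> sqrt (Q / c)"
    unfolding real_sqrt_mult[symmetric] using assms by (intro real_sqrt_le_mono) (simp add: field_simps)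
  then have "2 * m * (sqrt l * (4 * sqrt (1 / c * S))) \<le> 2 * m * (sqrt l * sqrt (Q / c))"
    using assms real_sqrt_unique[of 4 16] by (intro mult_left_mono) auto
  moreover have "8 * m * sqrt l * sqrt (1 / c * S) = 2 * m * (sqrt l * (4 * sqrt (1 / c * S)))"
    by simp
  ultimately show ?thesis by linarith
qed

theorem lemma9:
  fixes N :: nat and phi :: "nat \<Rightarrow> real^'d" and \<theta>s \<theta> :: "real^'d"
  assumes "\<exists>i<N. phi i \<noteq> 0"
  shows "\<exists>D. GDERIV (loss N phi \<theta>s) \<theta> :> D \<and>
    norm D \<ge> 8 * u_min N phi \<theta> * min (u_min N phi \<theta>) (u_min N phi \<theta>s)
              * sqrt (min_pos_eigenvalue (second_moment N phi))
              * sqrt ((1 / real N) * (\<Sum>i<N. (sigmoid (phi i \<bullet> \<theta>) - sigmoid (phi i \<bullet> \<theta>s))\<^sup>2))"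
proof -
  have N: "0 < N" using assms by auto
  obtain \<delta> where \<delta>: "\<delta> \<in> span (phi ` {..<N})"
    and \<delta>_inner: "\<And>i. i < N \<Longrightarrow> phi i \<bullet> \<delta> = phi i \<bullet> (\<theta> - \<theta>s)"
    by (rule span_inner_representative[of phi "{..<N}" "\<theta> - \<theta>s"]) auto
  have "2 / real N * (u_min N phi \<theta> * min (u_min N phi \<theta>) (u_min N phi \<theta>s)) * (\<Sum>i<N. (phi i \<bullet> \<delta>)\<^sup>2)
      \<le> norm (loss_grad N phi \<theta>s \<theta>) * norm \<delta>"
    using loss_grad_inner_ge[of N phi, OF N \<delta>_inner] norm_cauchy_schwarz by (rule order_trans)
  moreover have "real N * min_pos_eigenvalue (second_moment N phi) * (norm \<delta>)\<^sup>2 \<le> (\<Sum>i<N. (phi i \<bullet> \<delta>)\<^sup>2)"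
    using second_moment_Rayleigh(2)[OF assms \<delta>] .
  moreover note residual_sq_sum_le[of N phi, OF \<delta>_inner]
  ultimately have "8 * (u_min N phi \<theta> * min (u_min N phi \<theta>) (u_min N phi \<theta>s))
      * sqrt (min_pos_eigenvalue (second_moment N phi))
      * sqrt (1 / real N * (\<Sum>i<N. (sigmoid (phi i \<bullet> \<theta>) - sigmoid (phi i \<bullet> \<theta>s))\<^sup>2))
      \<le> norm (loss_grad N phi \<theta>s \<theta>)"
    using N u_min_nonneg[OF N, of phi] second_moment_Rayleigh(1)[OF assms]
    by (intro gradient_norm_lower_bound_arith) auto
  with GDERIV_loss[of N phi \<theta>s \<theta>] show ?thesis by (auto simp: mult.assoc)
qed

end
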